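(* Let $A$ be a synaptic algebra and let $p,q\in P$ be in generic position ($p\wedge q=p\wedge q^{\perp}=p^{\perp}\wedge q=p^{\perp}\wedge q^{\perp}=0$). Let $c:=(pqp+p^{\perp}q^{\perp}p^{\perp})^{1/2}$, let $u$ and $v$ be the symmetries of the polar decompositions of $p-q^{\perp}$ and $p-q$, respectively, and put $j:=uvp+pvu$ (so that $q=c^2p+csj+s^2p^{\perp}$ with $s:=(pq^{\perp}p+p^{\perp}qp^{\perp})^{1/2}$). Then an element $a\in A$ commutes with both $p$ and $q$ iff there exists $b\in C(c)$ such that $b=bp=pb$ and $a=b+jbj$.
   Context: Synaptic algebra (Foulis): $R$ is a real linear associative algebra with unit $1$, and $A\subseteq R$ is a real linear subspace with $1\in A$. For $a,b\in A$ write $aCb$ iff $ab=ba$; $C(a):=\{b\in A: aCb\}$; $CC(a):=\{b\in A: bCd \text{ for all } d\in C(a)\}$. $A$ is a synaptic algebra with enveloping algebra $R$ iff: (SA1) $A$ is a partially ordered archimedean real linear space with positive cone $A^+$, $1$ is an order unit, $\|\cdot\|$ the order-unit norm; (SA2) $a\in A\Rightarrow a^2\in A^+$; (SA3) $a,b\in A^+\Rightarrow aba\in A^+$; (SA4) if $a\in A$, $b\in A^+$, $aba=0$ then $ab=ba=0$; (SA5) if $a\in A^+$ there is $b\in A^+\cap CC(a)$ with $b^2=a$; (SA6) for $a\in A$ there is $p=p^2\in A$ with $ab=0\Leftrightarrow pb=0$ for all $b\in A$; (SA7) if $1\le a$ there is $b\in A$ with $ab=ba=1$; (SA8) if $a,b\in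 A$, $a_1\le a_2\le\cdots$ are pairwise commuting elements of $C(b)$ with $\|a-a_n\|\to0$, then $a\in C(b)$. $A$ is nondegenerate. Products are computed in $R$. $P:=\{p\in A:p=p^2\}$ with inherited order is an orthomodular lattice with $p^{\perp}:=1-p$, meet $\wedge$, join $\vee$. For $0\le a$, $a^{1/2}$ is its unique positive square root in $A$, $|a|:=(a^2)^{1/2}$; $a^{\circ}$ is the carrier of $a$ (the unique projection with $ab=0\Leftrightarrow a^{\circ}b=0$ for all $b\in A$). A symmetry is $u\in A$ with $u^2=1$. For $a\in A$, the signum $t$ of $a$ is the partial symmetry with $t^2=a^{\circ}$, $t\in CC(a)$, $a=|a|t=t|a|$; the symmetry of the polar decomposition of $a$ is $t+(a^{\circ})^{\perp}$. *)

theory Defs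
  imports "HOL-Analysis.Analysis"
begin

text \<open>The enveloping algebra R is the type 'a of class
real_algebra_1 (real linear associative algebra with unit); the synaptic algebra is a set
A of elements of R, and its positive cone is a set Pos.  Products are computed in R.\<close>

definition sa_le :: "'a::real_algebra_1 set \<Rightarrow> 'a \<Rightarrow> 'a \<Rightarrow> bool" where
  "sa_le Pos a b \<longleftrightarrow> b - a \<in> Pos"

definition sa_C :: "'a::real_algebra_1 set \<Rightarrow> 'a \<Rightarrow> 'a set" where
  "sa_C A a = {b \<in> A. a * b = b * a}"

definition sa_CC :: "'a::real_algebra_1 set \<Rightarrow> 'a \<Rightarrow> 'a set" where
  "sa_CC A a = {b \<in> A. \<forall>d \<in> sa_C A a. b * d = d * b}"

definition sa_norm :: "'a::real_algebra_1 set \<Rightarrow> 'a \<Rightarrow> real" where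
  "sa_norm Pos a = Inf {l. 0 \<le> l \<and> sa_le Pos (- (l *\<^sub>R 1)) a \<and> sa_le Pos a (l *\<^sub>R 1)}"

definition synaptic_algebra :: "'a::real_algebra_1 set \<Rightarrow> 'a set \<Rightarrow> bool" where
  "synaptic_algebra A Pos \<longleftrightarrow>
     subspace A \<and> 1 \<in> A \<and>
     \<comment> \<open>SA1: partially ordered archimedean real linear space, 1 an order unit\<close>
     Pos \<subseteq> A \<and> 0 \<in> Pos \<and>
     (\<forall>a\<in>Pos. \<forall>b\<in>Pos. a + b \<in> Pos) \<and>
     (\<forall>a\<in>Pos. \<forall>t::real. 0 \<le> t \<longrightarrow> t *\<^sub>R a \<in> Pos) \<and>
     (\<forall>a\<in>Pos. - a \<in> Pos \<longrightarrow> a = 0) \<and>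
     (\<forall>a\<in>A. \<forall>b\<in>A. (\<forall>n::nat. sa_le Pos (real n *\<^sub>R a) b) \<longrightarrow> sa_le Pos a 0) \<and>
     (\<forall>a\<in>A. \<exists>n::nat. sa_le Pos a (real n *\<^sub>R 1)) \<and>
     \<comment> \<open>SA2\<close>
     (\<forall>a\<in>A. a * a \<in> Pos) \<and>
     \<comment> \<open>SA3\<close>
     (\<forall>a\<in>Pos. \<forall>b\<in>Pos. a * b * a \<in> Pos) \<and>
     \<comment> \<open>SA4\<close>
     (\<forall>a\<in>A. \<forall>b\<in>Pos. a * b * a = 0 \<longrightarrow> a * b = 0 \<and> b * a = 0) \<and>
     \<comment> \<open>SA5\<close>
     (\<forall>a\<in>Pos. \<exists>b\<in>Pos. b \<in> sa_CC A a \<and> b * b = a) \<and>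
     \<comment> \<open>SA6\<close>
     (\<forall>a\<in>A. \<exists>p\<in>A. p * p = p \<and> (\<forall>b\<in>A. a * b = 0 \<longleftrightarrow> p * b = 0)) \<and>
     \<comment> \<open>SA7\<close>
     (\<forall>a\<in>A. sa_le Pos 1 a \<longrightarrow> (\<exists>b\<in>A. a * b = 1 \<and> b * a = 1)) \<and>
     \<comment> \<open>SA8\<close>
     (\<forall>a\<in>A. \<forall>b\<in>A. \<forall>x::nat \<Rightarrow> 'a.
        (\<forall>n. x n \<in> sa_C A b) \<and> (\<forall>m n. x m * x n = x n * x m) \<and>
        (\<forall>n. sa_le Pos (x n) (x (Suc n))) \<and>
        ((\<lambda>n. sa_norm Pos (a - x n)) \<longlonglongrightarrow> 0)
        \<longrightarrow> a \<in> sa_C A b)"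

definition sa_P :: "'a::real_algebra_1 set \<Rightarrow> 'a set" where
  "sa_P A = {p \<in> A. p * p = p}"

definition sa_meet :: "'a::real_algebra_1 set \<Rightarrow> 'a set \<Rightarrow> 'a \<Rightarrow> 'a \<Rightarrow> 'a" where
  "sa_meet A Pos p q = (THE r. r \<in> sa_P A \<and> sa_le Pos r p \<and> sa_le Pos r q \<and>
      (\<forall>s \<in> sa_P A. sa_le Pos s p \<and> sa_le Pos s q \<longrightarrow> sa_le Pos s r))"

definition sa_perp :: "'a::real_algebra_1 \<Rightarrow> 'a" where
  "sa_perp p = 1 - p"

definition generic_position :: "'a::real_algebra_1 set \<Rightarrow> 'a set \<Rightarrow> 'a \<Rightarrow> 'a \<Rightarrow> bool" where
  "generic_position A Pos p q \<longleftrightarrow>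
     sa_meet A Pos p q = 0 \<and> sa_meet A Pos p (sa_perp q) = 0 \<and>
     sa_meet A Pos (sa_perp p) q = 0 \<and> sa_meet A Pos (sa_perp p) (sa_perp q) = 0"

definition sa_sqrt :: "'a::real_algebra_1 set \<Rightarrow> 'a \<Rightarrow> 'a" where
  "sa_sqrt Pos a = (THE b. b \<in> Pos \<and> b * b = a)"

definition sa_abs :: "'a::real_algebra_1 set \<Rightarrow> 'a \<Rightarrow> 'a" where
  "sa_abs Pos a = sa_sqrt Pos (a * a)"

definition sa_carrier :: "'a::real_algebra_1 set \<Rightarrow> 'a \<Rightarrow> 'a" where
  "sa_carrier A a = (THE p. p \<in> sa_P A \<and> (\<forall>b\<in>A. a * b = 0 \<longleftrightarrow> p * b = 0))"

definition sa_signum :: "'a::real_algebra_1 set \<Rightarrow> 'a set \<Rightarrow> 'a \<Rightarrow> 'a" where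
  "sa_signum A Pos a = (THE t. t \<in> A \<and> t * t = sa_carrier A a \<and> t \<in> sa_CC A a \<and>
      a = sa_abs Pos a * t \<and> a = t * sa_abs Pos a)"

definition sa_polar_symmetry :: "'a::real_algebra_1 set \<Rightarrow> 'a set \<Rightarrow> 'a \<Rightarrow> 'a" where
  "sa_polar_symmetry A Pos a = sa_signum A Pos a + sa_perp (sa_carrier A a)"

end

theory Submission
  imports Defs
begin

text \<open>Put X = p - q and Y = p - (1 - q). Then X X + Y Y = 1, X Y = - Y X and X + Y = 2p - 1.
  Generic position makes X X and Y Y have full carrier, so the polar decompositions X = s v and
  Y = c u have genuine symmetries v, u. The elements s, c, u, v commute pairwise except u and v,
  which anticommute because X and Y do. In this rotation picture j = s u - c v is a symmetry
  with j p = (1 - p) j, and u = s j + c (2p - 1), v = s (2p - 1) - c j. Hence an element commutes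
  with p and q iff it commutes with p, s, c and j, and then a = p a + j (p a) j.\<close>

lemma add_self_cancel: "(x::'a::real_algebra_1) + x = y + y \<Longrightarrow> x = y"
proof -
  assume "x + x = y + y"
  then have "(2::real) *\<^sub>R x = (2::real) *\<^sub>R y" by (simp add: scaleR_2)
  then show ?thesis by simp
qed

lemma commute_mult: "(a::'a::semigroup_mult) * x = x * a \<Longrightarrow> a * y = y * a \<Longrightarrow> a * (x * y) = (x * y) * a"
  by (metis mult.assoc)

lemma commute_add: "(a::'a::ring) * x = x * a \<Longrightarrow> a * y = y * a \<Longrightarrow> a * (x + y) = (x + y) * a"
  by (simp add: algebra_simps)

lemma commute_diff: "(a::'a::ring) * x = x * a \<Longrightarrow> a * y = y * a \<Longrightarrow> a * (x - y) = (x - y) * a"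
  by (simp add: algebra_simps)

lemma mult_left_commute_of: "(x::'a::semigroup_mult) * y = y * x \<Longrightarrow> x * (y * z) = y * (x * z)"
  by (simp flip: mult.assoc)

lemma commute_double_minus_one:
  "(a::'a::ring_1) * x = x * a \<Longrightarrow> a * (x + x - 1) = (x + x - 1) * a"
  by (simp add: algebra_simps)

lemma CC_commute: "z \<in> sa_CC A w \<Longrightarrow> d \<in> A \<Longrightarrow> d * w = w * d \<Longrightarrow> z * d = d * z"
  unfolding sa_CC_def sa_C_def by auto

lemma square_diff_idempotents:
  fixes p q :: "'a::ring_1"
  assumes "p * p = p" and "q * q = q"
  shows "(p - q) * (p - q) = p * (1 - q) * p + (1 - p) * q * (1 - p)"
  using assms by (simp add: algebra_simps)

lemma rotated_symmetries:
  fixes s c u v :: "'a::ring_1"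
  assumes cc: "c * c = 1 - s * s" and uu: "u * u = 1" and vv: "v * v = 1"
    and anti: "v * u = - (u * v)" and cs: "c * s = s * c" and us: "u * s = s * u"
    and vs: "v * s = s * v" and uc: "u * c = c * u" and vc: "v * c = c * v"
  defines "r \<equiv> s * v + c * u" and "j \<equiv> s * u - c * v"
  shows "u * v * (1 + r) + (1 + r) * v * u = j + j"
    and "j * j = 1"
    and "j * r = - (r * j)"
    and "u = s * j + c * r"
    and "v = s * r - c * j"
proof -
  have left: "x * (y * z) = w * z" if "x * y = w" for x y w z :: 'a
    using that by (simp flip: mult.assoc)
  note R = cc left[OF cc] uu left[OF uu] vv left[OF vv] anti left[OF anti] cs left[OF cs]
    us left[OF us] vs left[OF vs] uc left[OF uc] vc left[OF vc]
  show "u * v * (1 + r) + (1 + r) * v * u = j + j" unfolding r_def j_def by (simp add: algebra_simps R)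
  show "j * j = 1" unfolding j_def by (simp add: algebra_simps R)
  show "j * r = - (r * j)" unfolding r_def j_def by (simp add: algebra_simps R)
  show "u = s * j + c * r" unfolding r_def j_def by (simp add: algebra_simps R)
  show "v = s * r - c * j" unfolding r_def j_def by (simp add: algebra_simps R)
qed

locale synaptic =
  fixes A Pos :: "'a::real_algebra_1 set"
  assumes synaptic_algebra: "synaptic_algebra A Pos"
begin

lemma sa_axioms:
  "subspace A" "1 \<in> A" "Pos \<subseteq> A" "\<forall>a\<in>Pos. - a \<in> Pos \<longrightarrow> a = 0"
  "\<forall>a\<in>A. a * a \<in> Pos" "\<forall>a\<in>Pos. \<forall>b\<in>Pos. a * b * a \<in> Pos"
  "\<forall>a\<in>A. \<forall>b\<in>Pos. a * b * a = 0 \<longrightarrow> a * b = 0 \<and> b * a = 0"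
  "\<forall>a\<in>Pos. \<exists>b\<in>Pos. b \<in> sa_CC A a \<and> b * b = a"
  "\<forall>a\<in>A. \<exists>e\<in>A. e * e = e \<and> (\<forall>b\<in>A. a * b = 0 \<longleftrightarrow> e * b = 0)"
  by (insert synaptic_algebra, unfold synaptic_algebra_def, elim conjE, assumption)+

lemma subspace_A: "subspace A"
  using sa_axioms(1) .

lemma one_mem: "1 \<in> A"
  using sa_axioms(2) .

lemma Pos_mem: "x \<in> Pos \<Longrightarrow> x \<in> A"
  using sa_axioms(3) by blast

lemma Pos_antisym: "x \<in> Pos \<Longrightarrow> - x \<in> Pos \<Longrightarrow> x = 0"
  using sa_axioms(4) by blast

lemma square_Pos: "a \<in> A \<Longrightarrow> a * a \<in> Pos"
  using sa_axioms(5) by blast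

lemma sandwich_Pos: "a \<in> Pos \<Longrightarrow> b \<in> Pos \<Longrightarrow> a * b * a \<in> Pos"
  using sa_axioms(6) by blast

lemma sandwich_eq_zero: "a \<in> A \<Longrightarrow> b \<in> Pos \<Longrightarrow> a * b * a = 0 \<Longrightarrow> a * b = 0 \<and> b * a = 0"
  using sa_axioms(7) by blast

lemma sqrt_exists: "a \<in> Pos \<Longrightarrow> \<exists>b\<in>Pos. b \<in> sa_CC A a \<and> b * b = a"
  using sa_axioms(8) by blast

lemma carrier_exists: "a \<in> A \<Longrightarrow> \<exists>e\<in>A. e * e = e \<and> (\<forall>b\<in>A. a * b = 0 \<longleftrightarrow> e * b = 0)"
  using sa_axioms(9) by blast

lemma add_mem: "x \<in> A \<Longrightarrow> y \<in> A \<Longrightarrow> x + y \<in> A"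
  using subspace_A by (rule subspace_add)

lemma diff_mem: "x \<in> A \<Longrightarrow> y \<in> A \<Longrightarrow> x - y \<in> A"
  using subspace_A by (rule subspace_diff)

lemma scaleR_mem: "x \<in> A \<Longrightarrow> r *\<^sub>R x \<in> A"
  using subspace_A by (rule subspace_mul)

lemma one_Pos: "1 \<in> Pos"
  using square_Pos[OF one_mem] by simp

lemma square_mem: "a \<in> A \<Longrightarrow> a * a \<in> A"
  by (rule Pos_mem[OF square_Pos])

lemma jordan_mem:
  assumes x: "x \<in> A" and y: "y \<in> A"
  shows "x * y + y * x \<in> A"
proof -
  have "x * y + y * x = (x + y) * (x + y) - x * x - y * y" by (simp add: algebra_simps)
  also have "\<dots> \<in> A" using x y by (intro diff_mem square_mem add_mem)
  finally show ?thesis .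
qed

lemma commuting_mult_mem:
  assumes "x \<in> A" and "y \<in> A" and "x * y = y * x"
  shows "x * y \<in> A"
proof -
  have "x * y = (1/2) *\<^sub>R (x * y + y * x)" using \<open>x * y = y * x\<close> by (simp flip: scaleR_2)
  also have "\<dots> \<in> A" using assms by (intro scaleR_mem jordan_mem)
  finally show ?thesis .
qed

lemma projection_sandwich_mem:
  assumes e: "e \<in> sa_P A" and d: "d \<in> A"
  shows "e * d * e \<in> A"
proof -
  have ee: "e * e = e" and eA: "e \<in> A" using e unfolding sa_P_def by auto
  have ee': "e * (e * x) = e * x" for x using ee by (simp flip: mult.assoc)
  have "e * d * e = (1/2) *\<^sub>R (e * (e * d + d * e) + (e * d + d * e) * e - (e * d + d * e))"
    using ee by (simp add: algebra_simps ee' flip: scaleR_2)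
  also have "\<dots> \<in> A" using eA d by (intro scaleR_mem diff_mem jordan_mem)
  finally show ?thesis .
qed

lemma projection_Pos:
  assumes "e \<in> sa_P A"
  shows "e \<in> Pos"
proof -
  have "e * e \<in> Pos" using assms square_Pos unfolding sa_P_def by blast
  then show ?thesis using assms unfolding sa_P_def by simp
qed

lemma projection_compl: "e \<in> sa_P A \<Longrightarrow> 1 - e \<in> sa_P A"
  unfolding sa_P_def using diff_mem[OF one_mem] by (auto simp: algebra_simps)

lemma Pos_mult_eq_zero_commute:
  assumes e: "e \<in> Pos" and b: "b \<in> A"
  shows "e * b = 0 \<longleftrightarrow> b * e = 0"
proof -
  have "b * e * b = 0" if "e * b = 0 \<or> b * e = 0"
    using that
  proof
    assume "e * b = 0"
    then show ?thesis by (simp add: mult.assoc)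
  qed simp
  then show ?thesis using sandwich_eq_zero[OF b e] by blast
qed

lemma Pos_add_eq_zero:
  assumes x: "x \<in> Pos" and y: "y \<in> Pos" and "x + y = 0"
  shows "x = 0 \<and> y = 0"
proof -
  have "y = - x" using \<open>x + y = 0\<close> by (simp add: eq_neg_iff_add_eq_0 add.commute)
  then show ?thesis using Pos_antisym x y by simp
qed

lemma sandwich_add_eq_zero:
  assumes k: "k \<in> Pos" and x: "x \<in> Pos" and y: "y \<in> Pos" and kk: "k * (x + y) * k = 0"
  shows "k * x = 0 \<and> k * y = 0"
proof -
  have "k * x * k + k * y * k = 0" using kk by (simp add: algebra_simps)
  then have "k * x * k = 0" "k * y * k = 0"
    using Pos_add_eq_zero[OF sandwich_Pos[OF k x] sandwich_Pos[OF k y]] by auto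
  then show ?thesis
    using sandwich_eq_zero[OF Pos_mem[OF k] x] sandwich_eq_zero[OF Pos_mem[OF k] y] by blast
qed

lemma projection_le_iff:
  assumes r: "r \<in> sa_P A" and e: "e \<in> sa_P A"
  shows "sa_le Pos r e \<longleftrightarrow> r * e = r"
proof
  have rA: "r \<in> A" "r * r = r" and eA: "e \<in> A" "e * e = e" using r e unfolding sa_P_def by auto
  have e': "1 - e \<in> Pos" and e'A: "1 - e \<in> A"
    using projection_compl[OF e] projection_Pos Pos_mem by auto
  show "r * e = r" if "sa_le Pos r e"
  proof -
    have "(1 - e) * (e - r) * (1 - e) \<in> Pos"
      using that sandwich_Pos[OF e'] unfolding sa_le_def by blast
    moreover have "(1 - e) * (e - r) * (1 - e) = - ((1 - e) * r * (1 - e))"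
      using eA by (simp add: algebra_simps)
    ultimately have "(1 - e) * r * (1 - e) = 0"
      using Pos_antisym sandwich_Pos[OF e' projection_Pos[OF r]] by simp
    then have "(1 - e) * r = 0" using sandwich_eq_zero[OF e'A projection_Pos[OF r]] by blast
    then have "r * (1 - e) = 0" using Pos_mult_eq_zero_commute[OF e' rA(1)] by blast
    then show ?thesis by (simp add: algebra_simps)
  qed
  show "sa_le Pos r e" if re: "r * e = r"
  proof -
    have "r * (1 - e) = 0" using re by (simp add: algebra_simps)
    then have "(1 - e) * r = 0" using Pos_mult_eq_zero_commute[OF e' rA(1)] by blast
    then have "(e - r) * (e - r) = e - r" using re rA eA by (simp add: algebra_simps)
    then show ?thesis using square_Pos[OF diff_mem[OF eA(1) rA(1)]] unfolding sa_le_def by simp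
  qed
qed

lemma commuting_sandwich_Pos:
  assumes w: "w \<in> A" and b: "b \<in> Pos" and wb: "w * b = b * w"
  shows "w * b * w \<in> Pos"
proof -
  obtain h where h: "h \<in> Pos" "h \<in> sa_CC A b" "h * h = b" using sqrt_exists[OF b] by blast
  have hw: "h * w = w * h" using CC_commute[OF h(2) w wb] .
  have "w * b * w = (w * h) * (h * w)" unfolding h(3)[symmetric] by (simp add: mult.assoc)
  also have "\<dots> = (h * w) * (w * h)" using hw by simp
  also have "\<dots> = h * (w * w) * h" by (simp add: mult.assoc)
  finally show ?thesis using sandwich_Pos[OF h(1) square_Pos[OF w]] by simp
qed

text \<open>Two commuting positive square roots b, r of a agree: with w = b - r, the positive
  elements w b w and w r w add up to (b b - r r) w = 0.\<close>
lemma positive_sqrt_unique: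
  assumes b: "b \<in> Pos" "b * b = a" and r: "r \<in> Pos" "r \<in> sa_CC A a" "r * r = a"
  shows "b = r"
proof -
  have bA: "b \<in> A" and rA: "r \<in> A" using b r Pos_mem by auto
  have rb: "r * b = b * r" using CC_commute[OF r(2) bA] b(2) by (auto simp: mult.assoc)
  define w where "w = b - r"
  have wA: "w \<in> A" unfolding w_def using bA rA by (rule diff_mem)
  have wb: "w * b = b * w" and wr: "w * r = r * w" unfolding w_def using rb by (simp_all add: algebra_simps)
  have "w * b * w + w * r * w = (b * b - r * r) * w"
    unfolding w_def using rb by (simp add: algebra_simps)
  then have "w * b * w + w * r * w = 0" using b(2) r(3) by simp
  then have "w * b * w = 0" "w * r * w = 0"
    using Pos_add_eq_zero commuting_sandwich_Pos[OF wA b(1) wb] commuting_sandwich_Pos[OF wA r(1) wr]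
    by blast+
  then have "w * b = 0" "w * r = 0" using sandwich_eq_zero[OF wA] b(1) r(1) by blast+
  then have "w * 1 * w = 0" unfolding w_def by (simp add: algebra_simps)
  then have "w = 0" using sandwich_eq_zero[OF wA one_Pos] by simp
  then show ?thesis unfolding w_def by simp
qed

lemma sa_sqrt:
  assumes a: "a \<in> Pos"
  shows "sa_sqrt Pos a \<in> Pos" and "sa_sqrt Pos a * sa_sqrt Pos a = a" and "sa_sqrt Pos a \<in> sa_CC A a"
proof -
  obtain r where r: "r \<in> Pos" "r \<in> sa_CC A a" "r * r = a" using sqrt_exists[OF a] by blast
  have "sa_sqrt Pos a = r" unfolding sa_sqrt_def
  proof (rule the_equality)
    show "r \<in> Pos \<and> r * r = a" using r by simp
    show "b = r" if "b \<in> Pos \<and> b * b = a" for b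
      using positive_sqrt_unique[OF _ _ r] that by blast
  qed
  with r show "sa_sqrt Pos a \<in> Pos" "sa_sqrt Pos a * sa_sqrt Pos a = a" "sa_sqrt Pos a \<in> sa_CC A a"
    by simp_all
qed

lemma sa_abs:
  assumes "x \<in> A"
  shows "sa_abs Pos x \<in> Pos" and "sa_abs Pos x * sa_abs Pos x = x * x"
    and "sa_abs Pos x \<in> sa_CC A (x * x)"
  unfolding sa_abs_def using sa_sqrt[OF square_Pos[OF assms]] by simp_all

lemma abs_commute: "x \<in> A \<Longrightarrow> sa_abs Pos x * x = x * sa_abs Pos x"
  using CC_commute[OF sa_abs(3)] by (simp add: mult.assoc)

lemma sa_carrier:
  assumes w: "w \<in> A"
  shows "sa_carrier A w \<in> sa_P A \<and> (\<forall>b\<in>A. w * b = 0 \<longleftrightarrow> sa_carrier A w * b = 0)"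
proof -
  define is_carrier where "is_carrier e \<longleftrightarrow> e \<in> sa_P A \<and> (\<forall>b\<in>A. w * b = 0 \<longleftrightarrow> e * b = 0)" for e
  have kills_compl: "e * (1 - f) = 0" if "is_carrier e" "is_carrier f" for e f
  proof -
    have "f * (1 - f) = 0" using that(2) unfolding is_carrier_def sa_P_def by (simp add: algebra_simps)
    then show ?thesis
      using that projection_compl unfolding is_carrier_def sa_P_def by blast
  qed
  obtain e where e: "is_carrier e"
    using carrier_exists[OF w] unfolding is_carrier_def sa_P_def by blast
  have "f = e" if f: "is_carrier f" for f
  proof -
    have "e * (1 - f) = 0" "f * (1 - e) = 0" using kills_compl e f by blast+
    moreover have "(1 - e) * f = 0 \<longleftrightarrow> f * (1 - e) = 0"
      using f e projection_compl projection_Pos unfolding is_carrier_def sa_P_def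
      by (intro Pos_mult_eq_zero_commute) auto
    ultimately have "e = e * f" "f = e * f" by (simp_all add: algebra_simps)
    then show ?thesis by simp
  qed
  then have "sa_carrier A w = e"
    unfolding sa_carrier_def using e unfolding is_carrier_def by (intro the_equality) blast+
  then show ?thesis using e unfolding is_carrier_def by simp
qed

lemma carrier_mem_P: "w \<in> A \<Longrightarrow> sa_carrier A w \<in> sa_P A"
  using sa_carrier by blast

lemma mult_eq_zero_iff_carrier: "w \<in> A \<Longrightarrow> b \<in> A \<Longrightarrow> w * b = 0 \<longleftrightarrow> sa_carrier A w * b = 0"
  using sa_carrier by blast

lemma carrier_mult_right: "w \<in> A \<Longrightarrow> w * sa_carrier A w = w"
proof -
  assume w: "w \<in> A"
  let ?e = "sa_carrier A w"
  have "?e * (1 - ?e) = 0" using carrier_mem_P[OF w] unfolding sa_P_def by (simp add: algebra_simps)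
  then have "w * (1 - ?e) = 0"
    using mult_eq_zero_iff_carrier[OF w] projection_compl[OF carrier_mem_P[OF w]]
    unfolding sa_P_def by blast
  then show ?thesis by (simp add: algebra_simps)
qed

lemma carrier_mult_left: "w \<in> A \<Longrightarrow> sa_carrier A w * w = w"
proof -
  assume w: "w \<in> A"
  let ?e = "sa_carrier A w"
  have "w * (1 - ?e) = 0" using carrier_mult_right[OF w] by (simp add: algebra_simps)
  then have "(1 - ?e) * w = 0"
    using Pos_mult_eq_zero_commute[OF projection_Pos[OF projection_compl[OF carrier_mem_P[OF w]]] w]
    by simp
  then show ?thesis by (simp add: algebra_simps)
qed

lemma carrier_eq_one_iff:
  assumes w: "w \<in> A"
  shows "sa_carrier A w = 1 \<longleftrightarrow> (\<forall>k\<in>sa_P A. w * k = 0 \<longrightarrow> k = 0)"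
proof
  show "\<forall>k\<in>sa_P A. w * k = 0 \<longrightarrow> k = 0" if "sa_carrier A w = 1"
    using that mult_eq_zero_iff_carrier[OF w] unfolding sa_P_def by auto
  assume kernel: "\<forall>k\<in>sa_P A. w * k = 0 \<longrightarrow> k = 0"
  have "w * (1 - sa_carrier A w) = 0" using carrier_mult_right[OF w] by (simp add: algebra_simps)
  then have "1 - sa_carrier A w = 0"
    using kernel projection_compl[OF carrier_mem_P[OF w]] by blast
  then show "sa_carrier A w = 1" by simp
qed

lemma carrier_eq_one_cancel: "sa_carrier A w = 1 \<Longrightarrow> w \<in> A \<Longrightarrow> b \<in> A \<Longrightarrow> w * b = 0 \<Longrightarrow> b = 0"
  using mult_eq_zero_iff_carrier by simp

lemma carrier_mem_CC:
  assumes w: "w \<in> A"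
  shows "sa_carrier A w \<in> sa_CC A w"
  unfolding sa_CC_def
proof (intro CollectI conjI ballI)
  let ?e = "sa_carrier A w"
  have eP: "?e \<in> sa_P A" using carrier_mem_P[OF w] .
  have eA: "?e \<in> A" and ee: "?e * ?e = ?e" using eP unfolding sa_P_def by auto
  show "?e \<in> A" by (fact eA)
  fix d assume "d \<in> sa_C A w"
  then have dA: "d \<in> A" and wd: "w * d = d * w" unfolding sa_C_def by auto
  define b where "b = (?e * d + d * ?e) - (?e * d * ?e + ?e * d * ?e)"
  have bA: "b \<in> A" unfolding b_def using eA dA projection_sandwich_mem[OF eP dA]
    by (intro diff_mem add_mem jordan_mem)
  have we: "w * (?e * x) = w * x" for x using carrier_mult_right[OF w] by (simp flip: mult.assoc)
  have wd': "w * (d * x) = d * (w * x)" for x using wd by (simp flip: mult.assoc)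
  have ee': "?e * (?e * x) = ?e * x" for x using ee by (simp flip: mult.assoc)
  have "w * b = w * d - d * w" unfolding b_def
    by (simp add: algebra_simps we wd' carrier_mult_right[OF w])
  then have "?e * b = 0" using wd mult_eq_zero_iff_carrier[OF w bA] by simp
  moreover have "b * ?e = 0" using calculation Pos_mult_eq_zero_commute[OF projection_Pos[OF eP] bA] by simp
  moreover have "?e * b = ?e * d - ?e * d * ?e" "b * ?e = d * ?e - ?e * d * ?e"
    unfolding b_def by (simp_all add: algebra_simps ee ee')
  ultimately show "?e * d = d * ?e" by simp
qed

lemma meet_eq:
  assumes p: "p \<in> sa_P A" and q: "q \<in> sa_P A" and m: "m \<in> sa_P A"
    and mp: "m * p = m" and mq: "m * q = m"
    and greatest: "\<And>r. r \<in> sa_P A \<Longrightarrow> r * p = r \<Longrightarrow> r * q = r \<Longrightarrow> r * m = r"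
  shows "sa_meet A Pos p q = m"
  unfolding sa_meet_def
proof (rule the_equality)
  show "m \<in> sa_P A \<and> sa_le Pos m p \<and> sa_le Pos m q \<and>
      (\<forall>s\<in>sa_P A. sa_le Pos s p \<and> sa_le Pos s q \<longrightarrow> sa_le Pos s m)"
    using m mp mq greatest projection_le_iff p q by blast
  fix r assume r: "r \<in> sa_P A \<and> sa_le Pos r p \<and> sa_le Pos r q \<and>
      (\<forall>s\<in>sa_P A. sa_le Pos s p \<and> sa_le Pos s q \<longrightarrow> sa_le Pos s r)"
  then have "sa_le Pos m r" using m mp mq projection_le_iff p q by blast
  moreover have "sa_le Pos r m" using r greatest projection_le_iff p q m by blast
  ultimately have "r - m \<in> Pos" "- (r - m) \<in> Pos" unfolding sa_le_def by simp_all
  then have "r - m = 0" by (rule Pos_antisym)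
  then show "r = m" by simp
qed

lemma meet_eq_compl_carrier:
  assumes p: "p \<in> sa_P A" and q: "q \<in> sa_P A"
  shows "sa_meet A Pos p q = 1 - sa_carrier A ((1 - p) + (1 - q))"
proof -
  define w where "w = (1 - p) + (1 - q)"
  define e where "e = sa_carrier A w"
  have p': "1 - p \<in> sa_P A" and q': "1 - q \<in> sa_P A" using p q by (simp_all add: projection_compl)
  have wA: "w \<in> A" unfolding w_def using p' q' unfolding sa_P_def by (simp add: add_mem)
  have eP: "e \<in> sa_P A" unfolding e_def using carrier_mem_P[OF wA] .
  have mP: "1 - e \<in> sa_P A" using projection_compl[OF eP] .
  have "w * (1 - e) = 0" unfolding e_def using carrier_mult_right[OF wA] by (simp add: algebra_simps)
  then have "(1 - e) * ((1 - p) + (1 - q)) * (1 - e) = 0" unfolding w_def by (simp add: mult.assoc)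
  then have "(1 - e) * (1 - p) = 0" "(1 - e) * (1 - q) = 0"
    using sandwich_add_eq_zero[OF projection_Pos[OF mP] projection_Pos[OF p'] projection_Pos[OF q']]
    by blast+
  then have mp: "(1 - e) * p = 1 - e" and mq: "(1 - e) * q = 1 - e" by (simp_all add: algebra_simps)
  have "r * (1 - e) = r" if r: "r \<in> sa_P A" "r * p = r" "r * q = r" for r
  proof -
    have rA: "r \<in> A" using r unfolding sa_P_def by simp
    have "r * w = 0" unfolding w_def using r by (simp add: algebra_simps mult_2_right)
    then have "w * r = 0" using Pos_mult_eq_zero_commute[OF projection_Pos[OF r(1)] wA] by simp
    then have "e * r = 0" unfolding e_def using mult_eq_zero_iff_carrier[OF wA rA] by simp
    then have "r * e = 0" using Pos_mult_eq_zero_commute[OF projection_Pos[OF eP] rA] by simp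
    then show ?thesis by (simp add: algebra_simps)
  qed
  then have "sa_meet A Pos p q = 1 - e" by (rule meet_eq[OF p q mP mp mq])
  then show ?thesis unfolding e_def w_def .
qed

lemma meet_eq_zero_carrier:
  "p \<in> sa_P A \<Longrightarrow> q \<in> sa_P A \<Longrightarrow> sa_meet A Pos p q = 0 \<Longrightarrow> sa_carrier A ((1 - p) + (1 - q)) = 1"
  using meet_eq_compl_carrier by simp

text \<open>The positive element y = e k e is annihilated by both 1 - e and f, hence vanishes.\<close>
lemma compression_annihilator:
  assumes e: "e \<in> sa_P A" and f: "f \<in> sa_P A" and k: "k \<in> sa_P A"
    and ke: "k * (e * f * e) = 0" and full: "sa_carrier A ((1 - e) + f) = 1"
  shows "e * k = 0"
proof -
  have eA: "e \<in> A" "e * e = e" and fA: "f \<in> A" using e f unfolding sa_P_def by auto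
  define y where "y = e * k * e"
  have yP: "y \<in> Pos" unfolding y_def using sandwich_Pos projection_Pos e k by blast
  have "y * f * y = e * (k * (e * f * e)) * k * e" unfolding y_def by (simp add: mult.assoc)
  then have "f * y = 0" using ke sandwich_eq_zero[OF Pos_mem[OF yP] projection_Pos[OF f]] by simp
  moreover have "(1 - e) * y = 0" unfolding y_def using eA(2) by (simp add: algebra_simps flip: mult.assoc)
  ultimately have "((1 - e) + f) * y = 0" by (simp add: distrib_right)
  then have "y = 0"
    using carrier_eq_one_cancel[OF full] eA fA Pos_mem[OF yP] by (simp add: add_mem diff_mem one_mem)
  then show ?thesis unfolding y_def using sandwich_eq_zero[OF eA(1) projection_Pos[OF k]] by blast
qed

lemma carrier_square_diff:
  assumes p: "p \<in> sa_P A" and q: "q \<in> sa_P A"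
    and full_compl: "sa_carrier A ((1 - p) + (1 - q)) = 1" and full: "sa_carrier A (p + q) = 1"
  shows "sa_carrier A ((p - q) * (p - q)) = 1"
proof -
  have pA: "p \<in> A" "p * p = p" and qA: "q \<in> A" "q * q = q" using p q unfolding sa_P_def by auto
  have p': "1 - p \<in> sa_P A" and q': "1 - q \<in> sa_P A" using p q by (simp_all add: projection_compl)
  have "k = 0" if k: "k \<in> sa_P A" and kill: "(p - q) * (p - q) * k = 0" for k
  proof -
    have "k * (p * (1 - q) * p + (1 - p) * q * (1 - p)) * k = 0"
      using kill unfolding square_diff_idempotents[OF pA(2) qA(2)] by (simp add: mult.assoc)
    then have "k * (p * (1 - q) * p) = 0" "k * ((1 - p) * q * (1 - p)) = 0"
      using sandwich_add_eq_zero projection_Pos sandwich_Pos k p q p' q' by meson+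
    then have "p * k = 0" "(1 - p) * k = 0"
      using compression_annihilator[OF p q' k] compression_annihilator[OF p' q k] full_compl full
      by simp_all
    then show "k = 0" by (simp add: algebra_simps)
  qed
  then show ?thesis using carrier_eq_one_iff square_mem diff_mem pA(1) qA(1) by simp
qed

text \<open>With e the carrier of |x| + x, the symmetry 2e - 1 is a signum of x: since
  (|x| + x)(|x| - x) = 0, e annihilates |x| - x while fixing |x| + x.\<close>
lemma abs_symmetry_factorization:
  assumes x: "x \<in> A"
  shows "\<exists>t\<in>sa_CC A x. t * t = 1 \<and> x = sa_abs Pos x * t \<and> x = t * sa_abs Pos x"
proof -
  define s where "s = sa_abs Pos x"
  have sA: "s \<in> A" unfolding s_def using sa_abs(1)[OF x] Pos_mem by blast
  have ss: "s * s = x * x" and sCC: "s \<in> sa_CC A (x * x)" unfolding s_def using sa_abs[OF x] by simp_all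
  have sx: "s * x = x * s" unfolding s_def using abs_commute[OF x] .
  define w where "w = s + x"
  define e where "e = sa_carrier A w"
  have wA: "w \<in> A" unfolding w_def using sA x by (rule add_mem)
  have eP: "e \<in> sa_P A" unfolding e_def using carrier_mem_P[OF wA] .
  have eA: "e \<in> A" "e * e = e" using eP unfolding sa_P_def by auto
  have "w * (s - x) = 0" unfolding w_def using sx ss by (simp add: algebra_simps)
  then have es: "e * (s - x) = 0" unfolding e_def using mult_eq_zero_iff_carrier[OF wA diff_mem[OF sA x]] by simp
  then have se: "(s - x) * e = 0" using Pos_mult_eq_zero_commute[OF projection_Pos[OF eP] diff_mem[OF sA x]] by simp
  define t where "t = e + e - 1"
  have tA: "t \<in> A" unfolding t_def using eA one_mem by (simp add: add_mem diff_mem)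
  have tt: "t * t = 1" unfolding t_def using eA(2) by (simp add: algebra_simps)
  have "w * e = w" "e * w = w"
    unfolding e_def using carrier_mult_right[OF wA] carrier_mult_left[OF wA] by simp_all
  then have "s * e + x * e = s + x" "e * s + e * x = s + x"
    unfolding w_def by (simp_all add: algebra_simps)
  moreover have "s * e = x * e" "e * s = e * x" using se es by (simp_all add: algebra_simps)
  ultimately have "x = s * t" "x = t * s" unfolding t_def by (simp_all add: algebra_simps)
  moreover have "t \<in> sa_CC A x" unfolding sa_CC_def
  proof (intro CollectI conjI ballI tA)
    fix d assume "d \<in> sa_C A x"
    then have dA: "d \<in> A" and xd: "x * d = d * x" unfolding sa_C_def by auto
    have "d * s = s * d" using CC_commute[OF sCC dA] xd by (simp add: commute_mult)
    then have "d * w = w * d" unfolding w_def using xd by (simp add: algebra_simps)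
    then have "e * d = d * e" unfolding e_def using CC_commute[OF carrier_mem_CC[OF wA] dA] by simp
    then show "t * d = d * t" unfolding t_def by (simp add: algebra_simps)
  qed
  ultimately show ?thesis using tt unfolding s_def by blast
qed

lemma polar_symmetry:
  assumes x: "x \<in> A" and full: "sa_carrier A (x * x) = 1"
  shows "sa_polar_symmetry A Pos x \<in> sa_CC A x"
    and "sa_polar_symmetry A Pos x * sa_polar_symmetry A Pos x = 1"
    and "x = sa_abs Pos x * sa_polar_symmetry A Pos x"
    and "x = sa_polar_symmetry A Pos x * sa_abs Pos x"
proof -
  have xx: "x * x \<in> A" using square_mem[OF x] .
  have "k = 0" if "k \<in> sa_P A" "x * k = 0" for k
    using carrier_eq_one_cancel[OF full xx] that unfolding sa_P_def by (simp add: mult.assoc)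
  then have carrier_x: "sa_carrier A x = 1" using carrier_eq_one_iff[OF x] by blast
  obtain t where t: "t \<in> sa_CC A x" "t * t = 1" "x = sa_abs Pos x * t" "x = t * sa_abs Pos x"
    using abs_symmetry_factorization[OF x] by blast
  have tA: "t \<in> A" using t(1) unfolding sa_CC_def by simp
  have "sa_signum A Pos x = t" unfolding sa_signum_def
  proof (rule the_equality)
    show "t \<in> A \<and> t * t = sa_carrier A x \<and> t \<in> sa_CC A x \<and> x = sa_abs Pos x * t \<and> x = t * sa_abs Pos x"
      using t tA carrier_x by simp
    fix t' assume t': "t' \<in> A \<and> t' * t' = sa_carrier A x \<and> t' \<in> sa_CC A x \<and>
        x = sa_abs Pos x * t' \<and> x = t' * sa_abs Pos x"
    then have "sa_abs Pos x * (t' - t) = 0" using t(3) by (simp add: algebra_simps)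
    then have "x * x * (t' - t) = 0"
      unfolding sa_abs(2)[OF x, symmetric] by (simp add: mult.assoc)
    then have "t' - t = 0" using carrier_eq_one_cancel[OF full xx] diff_mem t' tA by blast
    then show "t' = t" by simp
  qed
  then have "sa_polar_symmetry A Pos x = t"
    unfolding sa_polar_symmetry_def sa_perp_def using carrier_x by simp
  with t show "sa_polar_symmetry A Pos x \<in> sa_CC A x"
    "sa_polar_symmetry A Pos x * sa_polar_symmetry A Pos x = 1"
    "x = sa_abs Pos x * sa_polar_symmetry A Pos x"
    "x = sa_polar_symmetry A Pos x * sa_abs Pos x" by simp_all
qed

end

locale generic_pair = synaptic +
  fixes p q :: "'a::real_algebra_1"
  assumes p: "p \<in> sa_P A" and q: "q \<in> sa_P A" and generic: "generic_position A Pos p q"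
begin

definition X where "X = p - q"
definition Y where "Y = p - (1 - q)"
definition s where "s = sa_abs Pos X"
definition c where "c = sa_abs Pos Y"
definition v where "v = sa_polar_symmetry A Pos X"
definition u where "u = sa_polar_symmetry A Pos Y"
definition j where "j = u * v * p + p * v * u"

lemma p_mem: "p \<in> A" and p_idem: "p * p = p" and q_mem: "q \<in> A" and q_idem: "q * q = q"
  using p q unfolding sa_P_def by auto

lemma X_mem: "X \<in> A" and Y_mem: "Y \<in> A"
  unfolding X_def Y_def using p_mem q_mem one_mem by (simp_all add: diff_mem)

lemma square_X_add_square_Y: "X * X + Y * Y = 1"
  unfolding X_def Y_def using p_idem q_idem by (simp add: algebra_simps)

lemma X_Y_anticommute: "X * Y = - (Y * X)"
  unfolding X_def Y_def using p_idem q_idem by (simp add: algebra_simps)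

lemma X_add_Y: "X + Y = p + p - 1" and Y_diff_X: "Y - X = q + q - 1"
  unfolding X_def Y_def by simp_all

lemma square_Y: "Y * Y = p * q * p + (1 - p) * (1 - q) * (1 - p)"
  unfolding Y_def using square_diff_idempotents[of p "1 - q"] p_idem q_idem
  by (simp add: algebra_simps)

lemma full_carrier_square_X: "sa_carrier A (X * X) = 1"
  and full_carrier_square_Y: "sa_carrier A (Y * Y) = 1"
proof -
  have meets: "sa_meet A Pos p q = 0" "sa_meet A Pos p (1 - q) = 0"
    "sa_meet A Pos (1 - p) q = 0" "sa_meet A Pos (1 - p) (1 - q) = 0"
    using generic unfolding generic_position_def sa_perp_def by auto
  have p': "1 - p \<in> sa_P A" and q': "1 - q \<in> sa_P A" using p q by (simp_all add: projection_compl)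
  show "sa_carrier A (X * X) = 1"
    unfolding X_def using carrier_square_diff[OF p q] meet_eq_zero_carrier[OF p q meets(1)]
      meet_eq_zero_carrier[OF p' q' meets(4)] by simp
  show "sa_carrier A (Y * Y) = 1"
    unfolding Y_def using carrier_square_diff[OF p q'] meet_eq_zero_carrier[OF p q' meets(2)]
      meet_eq_zero_carrier[OF p' q meets(3)] by simp
qed

lemma s_square: "s * s = X * X" and s_mem_CC: "s \<in> sa_CC A (X * X)"
  and c_square: "c * c = Y * Y" and c_mem_CC: "c \<in> sa_CC A (Y * Y)"
  unfolding s_def c_def using sa_abs X_mem Y_mem by simp_all

lemma v_mem_CC: "v \<in> sa_CC A X" and v_square: "v * v = 1" and X_eq: "X = s * v"
  and u_mem_CC: "u \<in> sa_CC A Y" and u_square: "u * u = 1" and Y_eq: "Y = c * u"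
  unfolding s_def c_def u_def v_def
  using polar_symmetry[OF X_mem full_carrier_square_X] polar_symmetry[OF Y_mem full_carrier_square_Y]
  by simp_all

lemma c_mem: "c \<in> A" and u_mem: "u \<in> A" and v_mem: "v \<in> A"
  using c_mem_CC u_mem_CC v_mem_CC unfolding sa_CC_def by simp_all

lemma commute_square_X_iff_square_Y: "d * (X * X) = (X * X) * d \<longleftrightarrow> d * (Y * Y) = (Y * Y) * d"
proof -
  have YY: "Y * Y = 1 - X * X" using square_X_add_square_Y by (simp add: algebra_simps)
  show ?thesis unfolding YY by (auto simp: algebra_simps)
qed

lemma s_commute: "d \<in> A \<Longrightarrow> d * (X * X) = (X * X) * d \<Longrightarrow> s * d = d * s"
  using CC_commute[OF s_mem_CC] .

lemma c_commute: "d \<in> A \<Longrightarrow> d * (X * X) = (X * X) * d \<Longrightarrow> c * d = d * c"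
  using CC_commute[OF c_mem_CC] commute_square_X_iff_square_Y by blast

lemma commute_square_X_of_X: "d * X = X * d \<Longrightarrow> d * (X * X) = (X * X) * d"
  by (rule commute_mult)

lemma commute_square_X_of_Y: "d * Y = Y * d \<Longrightarrow> d * (X * X) = (X * X) * d"
  using commute_mult commute_square_X_iff_square_Y by blast

lemma v_commute_X: "v * X = X * v" and u_commute_Y: "u * Y = Y * u"
  using CC_commute[OF v_mem_CC X_mem] CC_commute[OF u_mem_CC Y_mem] by simp_all

lemma s_commute_c: "c * s = s * c"
  and s_commute_u: "u * s = s * u" and s_commute_v: "v * s = s * v"
  and c_commute_u: "u * c = c * u" and c_commute_v: "v * c = c * v"
proof -
  have "c * (Y * Y) = (Y * Y) * c" unfolding c_square[symmetric] by (simp add: mult.assoc)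
  then show "c * s = s * c" using s_commute[OF c_mem] commute_square_X_iff_square_Y by simp
  show "u * s = s * u" using s_commute[OF u_mem commute_square_X_of_Y[OF u_commute_Y]] by simp
  show "v * s = s * v" using s_commute[OF v_mem commute_square_X_of_X[OF v_commute_X]] by simp
  show "u * c = c * u" using c_commute[OF u_mem commute_square_X_of_Y[OF u_commute_Y]] by simp
  show "v * c = c * v" using c_commute[OF v_mem commute_square_X_of_X[OF v_commute_X]] by simp
qed

lemmas commutations = s_commute_c s_commute_u s_commute_v c_commute_u c_commute_v
  s_commute_c[THEN mult_left_commute_of] s_commute_u[THEN mult_left_commute_of]
  s_commute_v[THEN mult_left_commute_of] c_commute_u[THEN mult_left_commute_of]
  c_commute_v[THEN mult_left_commute_of]

text \<open>From X Y + Y X = 0 one gets s c (u v + v u) = 0; multiplying by s c and using that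
  X X and Y Y have full carrier cancels s c.\<close>
lemma u_v_anticommute: "v * u = - (u * v)"
proof -
  define w where "w = v * u + u * v"
  have wA: "w \<in> A" unfolding w_def using jordan_mem[OF v_mem u_mem] .
  have "s * (c * w) = X * Y + Y * X"
    unfolding w_def X_eq Y_eq by (simp add: algebra_simps commutations)
  then have scw: "s * (c * w) = 0" using X_Y_anticommute by simp
  have "(Y * Y) * w = w * (Y * Y)"
    unfolding w_def c_square[symmetric] by (simp add: algebra_simps commutations)
  then have YYw: "Y * Y * w \<in> A" using commuting_mult_mem[OF square_mem[OF Y_mem] wA] by simp
  have "X * X * (Y * Y * w) = s * (c * (s * (c * w)))"
    unfolding s_square[symmetric] c_square[symmetric] by (simp add: mult.assoc commutations)
  then have "X * X * (Y * Y * w) = 0" using scw by simp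
  then have "Y * Y * w = 0"
    using carrier_eq_one_cancel[OF full_carrier_square_X square_mem[OF X_mem] YYw] by simp
  then have "w = 0"
    using carrier_eq_one_cancel[OF full_carrier_square_Y square_mem[OF Y_mem] wA] by simp
  then show ?thesis unfolding w_def by (simp add: eq_neg_iff_add_eq_0)
qed

lemma c_square_eq: "c * c = 1 - s * s"
  using square_X_add_square_Y s_square c_square by (simp add: algebra_simps)

lemma double_p: "p + p - 1 = s * v + c * u"
  using X_add_Y X_eq Y_eq by simp

lemmas rotation = rotated_symmetries[OF c_square_eq u_square v_square u_v_anticommute
    s_commute_c s_commute_u s_commute_v c_commute_u c_commute_v, folded double_p]

lemma j_eq: "j = s * u - c * v"
proof (rule add_self_cancel)
  have "j + j = u * v * (1 + (p + p - 1)) + (1 + (p + p - 1)) * v * u"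
    unfolding j_def by (simp add: algebra_simps)
  then show "j + j = (s * u - c * v) + (s * u - c * v)" using rotation(1) by simp
qed

lemma j_square: "j * j = 1"
  unfolding j_eq using rotation(2) .

lemma j_p: "j * p = (1 - p) * j"
proof -
  have "j * (p + p - 1) = - ((p + p - 1) * j)" unfolding j_eq using rotation(3) .
  then have "j * p + j * p = (1 - p) * j + (1 - p) * j" by (simp add: algebra_simps)
  then show ?thesis by (rule add_self_cancel)
qed

lemma p_j: "p * j = j * (1 - p)"
proof -
  have "j * (p + p - 1) = - ((p + p - 1) * j)" unfolding j_eq using rotation(3) .
  then have "p * j + p * j = j * (1 - p) + j * (1 - p)" by (simp add: algebra_simps)
  then show ?thesis by (rule add_self_cancel)
qed

lemma u_eq: "u = s * j + c * (p + p - 1)" and v_eq: "v = s * (p + p - 1) - c * j"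
  unfolding j_eq using rotation(4,5) .

lemma s_commute_j: "s * j = j * s" and c_commute_j: "c * j = j * c"
  unfolding j_eq by (simp_all add: algebra_simps commutations)

lemma commute_p_q_iff:
  assumes a: "a \<in> A"
  shows "(a * p = p * a \<and> a * q = q * a) \<longleftrightarrow>
    (a * p = p * a \<and> a * s = s * a \<and> a * c = c * a \<and> a * j = j * a)"
proof
  assume pq: "a * p = p * a \<and> a * q = q * a"
  then have aX: "a * X = X * a" and aY: "a * Y = Y * a"
    unfolding X_def Y_def by (simp_all add: algebra_simps)
  have "a * v = v * a" "a * u = u * a"
    using CC_commute[OF v_mem_CC a aX] CC_commute[OF u_mem_CC a aY] by simp_all
  moreover have "a * s = s * a" "a * c = c * a"
    using s_commute[OF a commute_square_X_of_X[OF aX]] c_commute[OF a commute_square_X_of_Y[OF aY]]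
    by simp_all
  ultimately have "a * j = j * a" unfolding j_eq by (intro commute_diff commute_mult)
  with pq \<open>a * s = s * a\<close> \<open>a * c = c * a\<close> show "a * p = p * a \<and> a * s = s * a \<and> a * c = c * a \<and> a * j = j * a"
    by blast
next
  assume comm: "a * p = p * a \<and> a * s = s * a \<and> a * c = c * a \<and> a * j = j * a"
  then have ap: "a * (p + p - 1) = (p + p - 1) * a" by (intro commute_double_minus_one) simp
  have "a * u = u * a" "a * v = v * a"
    unfolding u_eq v_eq using comm ap by (auto intro!: commute_add commute_diff commute_mult)
  then have "a * (Y - X) = (Y - X) * a"
    unfolding X_eq Y_eq using comm by (intro commute_diff commute_mult) auto
  then have "a * q + a * q = q * a + q * a" unfolding Y_diff_X by (simp add: algebra_simps)
  then show "a * p = p * a \<and> a * q = q * a" using comm add_self_cancel by blast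
qed

lemma p_commute_c: "p * c = c * p"
proof -
  have pp: "p * (p * x) = p * x" for x using p_idem by (simp flip: mult.assoc)
  have "p * (X * X) = (X * X) * p"
    unfolding X_def using square_diff_idempotents[OF p_idem q_idem] p_idem
    by (simp add: algebra_simps pp)
  then show ?thesis using c_commute[OF p_mem] by simp
qed

lemma commute_p_q_iff_decomposition:
  assumes a: "a \<in> A"
  shows "(a * p = p * a \<and> a * q = q * a) \<longleftrightarrow>
    (\<exists>b \<in> sa_C A c. b = b * p \<and> b = p * b \<and> a = b + j * b * j)"
proof
  assume "a * p = p * a \<and> a * q = q * a"
  then have comm: "a * p = p * a" "a * c = c * a" "a * j = j * a"
    using commute_p_q_iff[OF a] by blast+
  define b where "b = p * a"
  have "b \<in> sa_C A c"
    unfolding b_def sa_C_def using commuting_mult_mem[OF p_mem a] comm p_commute_c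
    by (simp add: commute_mult)
  moreover have "b = b * p" "b = p * b"
    unfolding b_def using p_idem comm(1) by (simp_all add: mult.assoc flip: mult.assoc[of p p])
  moreover have "j * b * j = (1 - p) * a"
  proof -
    have "j * b * j = (j * p) * (a * j)" unfolding b_def by (simp add: mult.assoc)
    also have "\<dots> = (1 - p) * (j * j) * a" unfolding j_p comm(3) by (simp add: mult.assoc)
    finally show ?thesis using j_square by simp
  qed
  then have "a = b + j * b * j" unfolding b_def by (simp add: algebra_simps)
  ultimately show "\<exists>b \<in> sa_C A c. b = b * p \<and> b = p * b \<and> a = b + j * b * j" by blast
next
  assume "\<exists>b \<in> sa_C A c. b = b * p \<and> b = p * b \<and> a = b + j * b * j"
  then obtain b where bA: "b \<in> A" and bc: "b * c = c * b" and bp: "b = b * p" "b = p * b"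
    and ab: "a = b + j * b * j" unfolding sa_C_def by auto
  have "j * b * j * p = j * (b * (1 - p)) * j" by (simp add: mult.assoc j_p)
  also have "b * (1 - p) = 0" using bp(1) by (simp add: right_diff_distrib)
  finally have "a * p = b" unfolding ab by (simp add: distrib_right flip: bp(1))
  have "p * (j * b * j) = j * ((1 - p) * b) * j" by (simp add: p_j flip: mult.assoc)
  also have "(1 - p) * b = 0" using bp(2) by (simp add: left_diff_distrib)
  finally have "p * a = b" unfolding ab by (simp add: distrib_left flip: bp(2))
  with \<open>a * p = b\<close> have ap: "a * p = p * a" by simp
  have "b * (Y * Y) = (Y * Y) * b" unfolding c_square[symmetric] using bc by (simp add: commute_mult)
  then have "b * s = s * b" using s_commute[OF bA] commute_square_X_iff_square_Y by simp
  then have "s * a = a * s" "c * a = a * c"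
    unfolding ab using bc s_commute_j c_commute_j by (auto intro!: commute_add commute_mult)
  moreover have "a * j = j * a"
  proof -
    have "a * j = b * j + j * b * (j * j)" unfolding ab by (simp add: algebra_simps)
    also have "\<dots> = j * b + (j * j) * b * j" using j_square by simp
    also have "\<dots> = j * a" unfolding ab by (simp add: algebra_simps)
    finally show ?thesis .
  qed
  ultimately show "a * p = p * a \<and> a * q = q * a" using commute_p_q_iff[OF a] ap by simp
qed

end

theorem theorem8p4:
  fixes A Pos :: "'a::real_algebra_1 set" and p q a :: 'a
  assumes "synaptic_algebra A Pos"
    and "p \<in> sa_P A" and "q \<in> sa_P A"
    and "generic_position A Pos p q"
    and "a \<in> A"
  shows "let c = sa_sqrt Pos (p * q * p + sa_perp p * sa_perp q * sa_perp p);
             u = sa_polar_symmetry A Pos (p - sa_perp q);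
             v = sa_polar_symmetry A Pos (p - q);
             j = u * v * p + p * v * u
         in (a * p = p * a \<and> a * q = q * a) \<longleftrightarrow>
            (\<exists>b \<in> sa_C A c. b = b * p \<and> b = p * b \<and> a = b + j * b * j)"
proof -
  interpret generic_pair A Pos p q
    by unfold_locales (fact assms)+
  have "sa_sqrt Pos (p * q * p + sa_perp p * sa_perp q * sa_perp p) = c"
    unfolding c_def sa_abs_def square_Y sa_perp_def ..
  moreover have "sa_polar_symmetry A Pos (p - sa_perp q) = u"
    unfolding u_def Y_def sa_perp_def ..
  moreover have "sa_polar_symmetry A Pos (p - q) = v"
    unfolding v_def X_def ..
  ultimately show ?thesis
    unfolding Let_def using commute_p_q_iff_decomposition[OF assms(5)] by (simp add: j_def)
qed

end
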